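(* Let $X$ be a topological space and $n\ge1$ an integer. There exists at most one partition $X=\Gamma_1\sqcup\Gamma_2$ with the following properties: (i) $\Gamma_1$ is open in $X$ and there is a homeomorphism $\psi_1\colon\mathbb R^\times\to\Gamma_1$; (ii) there is a homeomorphism $\psi_2\colon\mathbb R^{2n}\to\Gamma_2$; (iii) for every subset $A\subseteq\mathbb R^\times$ the following are equivalent: $0$ is an accumulation point of $A$; $\Gamma_2\cap\overline{\psi_1(A)}\ne\emptyset$; $\Gamma_2\subseteq\overline{\psi_1(A)}$. Moreover, for such a partition, $\Gamma_2$ is the unique maximal element of the partially ordered set $\mathrm{Cl}_H(X)$.
   Context: $\mathbb R^\times=\mathbb R\setminus\{0\}$. $\mathrm{Cl}_H(X)$ denotes the set of all closed subsets of $X$ that are connected and Hausdorff in the relative topology, partially ordered by inclusion. Subspaces $\Gamma_1,\Gamma_2$ carry the relative topology. *)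

theory Defs
  imports "HOL-Analysis.Analysis"
begin

definition ClH :: "'a topology \<Rightarrow> 'a set set" where
  "ClH X = {C. closedin X C \<and> connectedin X C \<and> Hausdorff_space (subtopology X C)}"

definition special_partition :: "'a topology \<Rightarrow> nat \<Rightarrow> 'a set \<Rightarrow> 'a set \<Rightarrow> bool" where
  "special_partition X n G1 G2 \<longleftrightarrow>
     G1 \<union> G2 = topspace X \<and> G1 \<inter> G2 = {} \<and>
     openin X G1 \<and>
     (\<exists>\<psi>2. homeomorphic_map (Euclidean_space (2 * n)) (subtopology X G2) \<psi>2) \<and>
     (\<exists>\<psi>1. homeomorphic_map (top_of_set (- {0::real})) (subtopology X G1) \<psi>1 \<and>
        (\<forall>A. A \<subseteq> - {0} \<longrightarrow>
           ((0 islimpt A) \<longleftrightarrow> G2 \<inter> X closure_of (\<psi>1 ` A) \<noteq> {}) \<and>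
           (G2 \<inter> X closure_of (\<psi>1 ` A) \<noteq> {} \<longleftrightarrow> G2 \<subseteq> X closure_of (\<psi>1 ` A))))"

definition maximal_in :: "'a set set \<Rightarrow> 'a set \<Rightarrow> bool" where
  "maximal_in S C \<longleftrightarrow> C \<in> S \<and> (\<forall>D\<in>S. C \<subseteq> D \<longrightarrow> D = C)"

end

(*
  Gamma2 is closed, being the complement of the open Gamma1, and it is connected and
  Hausdorff as a copy of R^2n. For D in Cl_H(X), psi1^-1(D) cannot accumulate at 0:
  otherwise by (iii) D would contain Gamma2, and every neighbourhood of a point of
  Gamma2 would contain psi1(a) for all such a near 0, so two points of Gamma2 could not
  be separated in D. Hence, by (iii) again, the intersection of D with Gamma1 is closed
  as well as open in D, and connectedness puts D inside Gamma1 or inside Gamma2; in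
  particular Gamma2 is maximal. A member C of Cl_H(X) inside Gamma1 is psi1 of a connected
  set bounded away from 0, so it lies in a ray [e, oo) or (-oo, -e]; psi1 of the ray
  [e/2, oo), resp. (-oo, -e/2], is a strictly larger member of Cl_H(X). Thus Gamma2 is
  the unique maximal element, which determines Gamma2 and with it Gamma1 = X - Gamma2.
*)

theory Submission
  imports Defs
begin

lemma closedin_if_closedin_subtopology_closure_subset:
  assumes "closedin (subtopology X U) S" and "X closure_of S \<subseteq> U"
  shows "closedin X S"
proof -
  obtain T where T: "closedin X T" "S = T \<inter> U"
    using assms(1) by (auto simp: closedin_subtopology)
  have "X closure_of S \<subseteq> T"
    using T by (simp add: closure_of_minimal)
  with assms(2) T(2) have "X closure_of S \<subseteq> S" by blast
  moreover have "S \<subseteq> topspace X"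
    using T closedin_subset by blast
  ultimately show ?thesis
    using closure_of_subset_eq by blast
qed

lemma connected_not_limpt_psubset_closed_connected:
  fixes B :: "real set"
  assumes "connected B" "\<not> 0 islimpt B" "0 \<notin> B"
  obtains I where "closed I" "connected I" "0 \<notin> I" "B \<subset> I"
proof -
  obtain e where "e > 0" and e0: "\<forall>b\<in>B. b \<noteq> 0 \<longrightarrow> e \<le> dist b 0"
    using assms(2) unfolding islimpt_approachable by (auto simp: not_less)
  have e: "e \<le> \<bar>b\<bar>" if "b \<in> B" for b
    using e0 that assms(3) by (auto simp: dist_real_def)
  have "B \<subseteq> {0<..} \<or> B \<subseteq> {..<0}"
  proof (rule ccontr)
    assume "\<not> (B \<subseteq> {0<..} \<or> B \<subseteq> {..<0})"
    then obtain a b where "a \<in> B" "b \<in> B" "a \<le> 0" "0 \<le> b"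
      by (auto simp: subset_iff not_less)
    then show False
      using assms(1,3) unfolding connected_iff_interval by blast
  qed
  then show thesis
  proof
    assume "B \<subseteq> {0<..}"
    then have "B \<subseteq> {e/2..}"
      using \<open>e > 0\<close> e by fastforce
    moreover have "e/2 \<notin> B"
      using \<open>e > 0\<close> e[of "e/2"] by auto
    ultimately show thesis
      using \<open>e > 0\<close> by (intro that[of "{e/2..}"]) (auto simp: is_interval_connected)
  next
    assume "B \<subseteq> {..<0}"
    then have "B \<subseteq> {..-e/2}"
      using \<open>e > 0\<close> e by fastforce
    moreover have "-e/2 \<notin> B"
      using \<open>e > 0\<close> e[of "-e/2"] by auto
    ultimately show thesis
      using \<open>e > 0\<close> by (intro that[of "{..-e/2}"]) (auto simp: is_interval_connected)
  qed
qed

locale punctured_line_partition =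
  fixes X :: "'a topology" and G1 G2 :: "'a set" and \<psi> :: "real \<Rightarrow> 'a"
  assumes partition: "G1 \<union> G2 = topspace X" "G1 \<inter> G2 = {}"
    and openin_G1: "openin X G1"
    and homeomorphic_\<psi>: "homeomorphic_map (top_of_set (- {0})) (subtopology X G1) \<psi>"
    and connectedin_G2: "connectedin X G2"
    and Hausdorff_space_G2: "Hausdorff_space (subtopology X G2)"
    and two_points_G2: "\<exists>x\<in>G2. \<exists>y\<in>G2. x \<noteq> y"
    and limpt_imp_subset_closure:
      "\<And>A. A \<subseteq> - {0} \<Longrightarrow> 0 islimpt A \<Longrightarrow> G2 \<subseteq> X closure_of (\<psi> ` A)"
    and limpt_if_closure_meets:
      "\<And>A. A \<subseteq> - {0} \<Longrightarrow> G2 \<inter> X closure_of (\<psi> ` A) \<noteq> {} \<Longrightarrow> 0 islimpt A"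
begin

lemma image_\<psi>: "\<psi> ` (- {0}) = G1"
  using homeomorphic_imp_surjective_map[OF homeomorphic_\<psi>] partition by auto

lemma image_vimage_\<psi>: "\<psi> ` (- {0} \<inter> \<psi> -` S) = G1 \<inter> S"
  using image_\<psi> by auto

lemma G2_in_ClH: "G2 \<in> ClH X"
proof -
  have "G2 = topspace X - G1"
    using partition by blast
  then have "closedin X G2"
    using closedin_diff[OF closedin_topspace openin_G1] by simp
  then show ?thesis
    using connectedin_G2 Hausdorff_space_G2 by (simp add: ClH_def)
qed

lemma Hausdorff_space_G1: "Hausdorff_space (subtopology X G1)"
  using homeomorphic_Hausdorff_space[OF homeomorphic_map_imp_homeomorphic_space[OF homeomorphic_\<psi>]]
  by (simp add: Hausdorff_space_subtopology)

lemma not_limpt_if_Hausdorff: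
  assumes D: "closedin X D" "Hausdorff_space (subtopology X D)"
    and A: "A \<subseteq> - {0}" "\<psi> ` A \<subseteq> D"
  shows "\<not> 0 islimpt A"
proof
  let ?D = "subtopology X D"
  assume "0 islimpt A"
  have "G2 \<subseteq> D"
    using limpt_imp_subset_closure[OF A(1) \<open>0 islimpt A\<close>] closure_of_minimal[OF A(2) D(1)] by blast
  have avoid: "\<not> 0 islimpt {a \<in> A. \<psi> a \<notin> W}" if W: "openin ?D W" "W \<inter> G2 \<noteq> {}" for W
  proof
    assume "0 islimpt {a \<in> A. \<psi> a \<notin> W}"
    then have "G2 \<subseteq> X closure_of (\<psi> ` {a \<in> A. \<psi> a \<notin> W})"
      using A(1) by (intro limpt_imp_subset_closure) auto
    moreover have "?D closure_of (\<psi> ` {a \<in> A. \<psi> a \<notin> W}) = D \<inter> X closure_of (\<psi> ` {a \<in> A. \<psi> a \<notin> W})"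
      using A(2) by (intro closure_of_subtopology_open) auto
    ultimately have "G2 \<subseteq> ?D closure_of (\<psi> ` {a \<in> A. \<psi> a \<notin> W})"
      using \<open>G2 \<subseteq> D\<close> by blast
    moreover obtain z where "z \<in> W" "z \<in> G2"
      using W(2) by blast
    ultimately have "z \<in> ?D closure_of (\<psi> ` {a \<in> A. \<psi> a \<notin> W})"
      by blast
    then show False
      using W(1) \<open>z \<in> W\<close> unfolding in_closure_of by fastforce
  qed
  obtain x y where "x \<in> G2" "y \<in> G2" "x \<noteq> y"
    using two_points_G2 by blast
  moreover have "x \<in> topspace ?D" "y \<in> topspace ?D"
    using \<open>x \<in> G2\<close> \<open>y \<in> G2\<close> \<open>G2 \<subseteq> D\<close> partition(1) by auto
  ultimately obtain U V where "openin ?D U" "openin ?D V" "x \<in> U" "y \<in> V" "disjnt U V"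
    using D(2) unfolding Hausdorff_space_def by blast
  have "A \<subseteq> {a \<in> A. \<psi> a \<notin> U} \<union> {a \<in> A. \<psi> a \<notin> V}"
    using \<open>disjnt U V\<close> by (auto simp: disjnt_iff)
  then have "0 islimpt ({a \<in> A. \<psi> a \<notin> U} \<union> {a \<in> A. \<psi> a \<notin> V})"
    using islimpt_subset[OF \<open>0 islimpt A\<close>] by blast
  moreover have "\<not> 0 islimpt {a \<in> A. \<psi> a \<notin> U}" "\<not> 0 islimpt {a \<in> A. \<psi> a \<notin> V}"
    using avoid \<open>openin ?D U\<close> \<open>openin ?D V\<close> \<open>x \<in> U\<close> \<open>y \<in> V\<close> \<open>x \<in> G2\<close> \<open>y \<in> G2\<close>
    by blast+
  ultimately show False
    by (simp add: islimpt_Un)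
qed

lemma ClH_subset_G1_or_G2:
  assumes "D \<in> ClH X"
  shows "D \<subseteq> G1 \<or> D \<subseteq> G2"
proof -
  have D: "closedin X D" "connectedin X D" "Hausdorff_space (subtopology X D)"
    using assms by (auto simp: ClH_def)
  let ?A = "- {0} \<inter> \<psi> -` D"
  have "\<not> 0 islimpt ?A"
    using D image_vimage_\<psi> by (intro not_limpt_if_Hausdorff) auto
  then have "G2 \<inter> X closure_of (G1 \<inter> D) = {}"
    using limpt_if_closure_meets[of ?A] unfolding image_vimage_\<psi> by blast
  moreover have "X closure_of (G1 \<inter> D) \<subseteq> D \<inter> topspace X"
    using D(1) by (simp add: closure_of_minimal closure_of_subset_topspace)
  ultimately have "X closure_of (G1 \<inter> D) \<subseteq> G1 \<inter> D"
    using partition(1) by blast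
  moreover have "G1 \<inter> D \<subseteq> topspace X"
    using closedin_subset[OF D(1)] by blast
  ultimately have "closedin X (G1 \<inter> D)"
    using closure_of_subset_eq by blast
  then have "closedin (subtopology X D) (G1 \<inter> D)"
    by (simp add: closedin_subset_topspace)
  moreover have "openin (subtopology X D) (G1 \<inter> D)"
    using openin_G1 by (auto simp: openin_subtopology)
  moreover have "connectedin (subtopology X D) D"
    using D(2) by (simp add: connectedin_subtopology)
  ultimately have "D \<subseteq> G1 \<inter> D \<or> disjnt D (G1 \<inter> D)"
    by (rule connectedin_clopen_cases[rotated])
  then show ?thesis
    using closedin_subset[OF D(1)] partition by (auto simp: disjnt_iff)
qed

lemma maximal_in_ClH_G2: "maximal_in (ClH X) G2"
  unfolding maximal_in_def
proof (intro conjI ballI impI)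
  fix D assume "D \<in> ClH X" "G2 \<subseteq> D"
  moreover have "G2 \<noteq> {}"
    using two_points_G2 by blast
  ultimately have "\<not> D \<subseteq> G1"
    using partition(2) by blast
  then show "D = G2"
    using ClH_subset_G1_or_G2[OF \<open>D \<in> ClH X\<close>] \<open>G2 \<subseteq> D\<close> by blast
qed (rule G2_in_ClH)

lemma image_\<psi>_in_ClH:
  assumes "closed I" "connected I" "0 \<notin> I"
  shows "\<psi> ` I \<in> ClH X"
proof -
  have I: "I \<subseteq> topspace (top_of_set (- {0}))"
    using assms(3) by auto
  have "connectedin (subtopology X G1) (\<psi> ` I)"
    using homeomorphic_map_connectedness[OF homeomorphic_\<psi> I] assms(2) I
    by (simp add: connectedin_subtopology)
  then have connected: "connectedin X (\<psi> ` I)" and "\<psi> ` I \<subseteq> G1"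
    by (simp_all add: connectedin_subtopology)
  have "closedin (top_of_set (- {0})) I"
    using assms(1,3) by (intro closed_subset) auto
  then have closedin_G1: "closedin (subtopology X G1) (\<psi> ` I)"
    using homeomorphic_map_closedness[OF homeomorphic_\<psi> I] by blast
  have "\<not> 0 islimpt I"
    using assms(1,3) closed_limpt by blast
  then have "G2 \<inter> X closure_of (\<psi> ` I) = {}"
    using limpt_if_closure_meets[of I] I by auto
  then have "X closure_of (\<psi> ` I) \<subseteq> G1"
    using closure_of_subset_topspace[of X "\<psi> ` I"] partition(1) by blast
  with closedin_G1 have "closedin X (\<psi> ` I)"
    by (rule closedin_if_closedin_subtopology_closure_subset)
  moreover have "Hausdorff_space (subtopology X (\<psi> ` I))"
    using Hausdorff_space_subtopology[OF Hausdorff_space_G1, of "\<psi> ` I"] \<open>\<psi> ` I \<subseteq> G1\<close>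
    by (simp add: subtopology_subtopology inf_absorb2)
  ultimately show ?thesis
    using connected by (simp add: ClH_def)
qed

lemma not_maximal_in_ClH_if_subset_G1:
  assumes "C \<subseteq> G1"
  shows "\<not> maximal_in (ClH X) C"
proof
  assume max: "maximal_in (ClH X) C"
  then have C: "closedin X C" "connectedin X C" "Hausdorff_space (subtopology X C)"
    by (auto simp: maximal_in_def ClH_def)
  let ?B = "- {0} \<inter> \<psi> -` C"
  have "\<psi> ` ?B = C"
    using image_vimage_\<psi> assms by blast
  then have "connected ?B"
    using homeomorphic_map_connectedness[OF homeomorphic_\<psi>, of ?B] C(2) assms
    by (simp add: connectedin_subtopology)
  moreover have "\<not> 0 islimpt ?B"
    using C \<open>\<psi> ` ?B = C\<close> by (intro not_limpt_if_Hausdorff) auto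
  ultimately obtain I where I: "closed I" "connected I" "0 \<notin> I" "?B \<subset> I"
    by (rule connected_not_limpt_psubset_closed_connected) auto
  have "C \<subseteq> \<psi> ` I"
    using I(4) \<open>\<psi> ` ?B = C\<close> by blast
  then have "\<psi> ` I = C"
    using max image_\<psi>_in_ClH[OF I(1-3)] unfolding maximal_in_def by blast
  moreover obtain t where "t \<in> I" "t \<notin> ?B"
    using I(4) by blast
  ultimately show False
    using I(3) by auto
qed

lemma maximal_in_ClH_unique:
  assumes "maximal_in (ClH X) C"
  shows "C = G2"
proof -
  have "C \<in> ClH X"
    using assms by (simp add: maximal_in_def)
  then have "C \<subseteq> G2"
    using ClH_subset_G1_or_G2 not_maximal_in_ClH_if_subset_G1 assms by blast
  then show ?thesis
    using assms G2_in_ClH unfolding maximal_in_def by blast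
qed

end

lemma punctured_line_partition_if_special_partition:
  assumes "special_partition X n G1 G2" and "n \<ge> 1"
  obtains \<psi> where "punctured_line_partition X G1 G2 \<psi>"
proof -
  obtain \<psi> \<phi> where partition: "G1 \<union> G2 = topspace X" "G1 \<inter> G2 = {}" and "openin X G1"
    and \<phi>: "homeomorphic_map (Euclidean_space (2 * n)) (subtopology X G2) \<phi>"
    and \<psi>: "homeomorphic_map (top_of_set (- {0::real})) (subtopology X G1) \<psi>"
    and iii: "\<forall>A. A \<subseteq> - {0} \<longrightarrow>
        (0 islimpt A \<longleftrightarrow> G2 \<inter> X closure_of (\<psi> ` A) \<noteq> {}) \<and>
        (G2 \<inter> X closure_of (\<psi> ` A) \<noteq> {} \<longleftrightarrow> G2 \<subseteq> X closure_of (\<psi> ` A))"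
    using assms(1) unfolding special_partition_def by (elim conjE exE) (rule that; assumption)
  have \<phi>_space: "Euclidean_space (2 * n) homeomorphic_space subtopology X G2"
    using \<phi> homeomorphic_map_imp_homeomorphic_space by blast
  let ?x = "\<lambda>i::nat. 0::real" and ?y = "\<lambda>i::nat. if i = 0 then 1 else 0::real"
  have "?x \<in> topspace (Euclidean_space (2 * n))" "?y \<in> topspace (Euclidean_space (2 * n))" "?x \<noteq> ?y"
    using assms(2) by (auto simp: topspace_Euclidean_space fun_eq_iff)
  then have "\<phi> ?x \<in> G2" "\<phi> ?y \<in> G2" "\<phi> ?x \<noteq> \<phi> ?y"
    using homeomorphic_imp_surjective_map[OF \<phi>] homeomorphic_imp_injective_map[OF \<phi>] partition
    by (auto dest: inj_onD)
  have "punctured_line_partition X G1 G2 \<psi>"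
  proof
    show "connectedin X G2"
      using homeomorphic_connected_space[OF \<phi>_space] connected_Euclidean_space partition
      by (auto simp: connectedin_def)
    show "Hausdorff_space (subtopology X G2)"
      using homeomorphic_Hausdorff_space[OF \<phi>_space] Hausdorff_Euclidean_space by blast
    show "\<exists>x\<in>G2. \<exists>y\<in>G2. x \<noteq> y"
      using \<open>\<phi> ?x \<in> G2\<close> \<open>\<phi> ?y \<in> G2\<close> \<open>\<phi> ?x \<noteq> \<phi> ?y\<close> by blast
    then show "G2 \<subseteq> X closure_of (\<psi> ` A)" if "A \<subseteq> - {0}" "0 islimpt A" for A
      using iii[rule_format, OF that(1)] that(2) by blast
    show "0 islimpt A" if "A \<subseteq> - {0}" "G2 \<inter> X closure_of (\<psi> ` A) \<noteq> {}" for A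
      using iii[rule_format, OF that(1)] that(2) by blast
  qed (fact partition \<open>openin X G1\<close> \<psi>)+
  then show thesis
    by (rule that)
qed

lemma special_partition_complement:
  assumes "special_partition X n G1 G2"
  shows "G1 = topspace X - G2"
proof -
  have "G1 \<union> G2 = topspace X \<and> G1 \<inter> G2 = {}"
    using assms unfolding special_partition_def by (elim conjE) (rule conjI)
  then show ?thesis
    by blast
qed

theorem lemma2p3:
  fixes X :: "'a topology" and n :: nat
  assumes "n \<ge> 1"
  shows "(\<forall>G1 G2 H1 H2. special_partition X n G1 G2 \<and> special_partition X n H1 H2
            \<longrightarrow> G1 = H1 \<and> G2 = H2)
       \<and> (\<forall>G1 G2. special_partition X n G1 G2 \<longrightarrow>
            maximal_in (ClH X) G2 \<and> (\<forall>C. maximal_in (ClH X) C \<longrightarrow> C = G2))"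
proof -
  have maximal: "maximal_in (ClH X) G2 \<and> (\<forall>C. maximal_in (ClH X) C \<longrightarrow> C = G2)"
    if partition: "special_partition X n G1 G2" for G1 G2
  proof -
    obtain \<psi> where "punctured_line_partition X G1 G2 \<psi>"
      using punctured_line_partition_if_special_partition[OF partition assms] .
    then interpret punctured_line_partition X G1 G2 \<psi> .
    show ?thesis
      using maximal_in_ClH_G2 maximal_in_ClH_unique by blast
  qed
  have "G1 = H1 \<and> G2 = H2"
    if "special_partition X n G1 G2" "special_partition X n H1 H2" for G1 G2 H1 H2
  proof -
    have "G2 = H2"
      using maximal[OF that(1)] maximal[OF that(2)] by blast
    then show ?thesis
      using special_partition_complement that by blast
  qed
  with maximal show ?thesis
    by blast
qed

end
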